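(* Let $\Bbbk$ be an algebraically closed field and $A$ a semisimple $\Bbbk$-algebra, so that $A\cong M_{n_1}(\Bbbk)\times\cdots\times M_{n_r}(\Bbbk)$ by the Artin–Wedderburn theorem. Then $\operatorname{Frobdim}(A)=\sum_{i=1}^r n_i^2$.
   Context: A nearly Frobenius coproduct on a $\Bbbk$-algebra $A$ is a $\Bbbk$-linear map $\Delta:A\to A\otimes_\Bbbk A$ that is an $A$-bimodule morphism, i.e. $\Delta(ab)=(a\otimes 1)\Delta(b)=\Delta(a)(1\otimes b)$ for all $a,b\in A$. The Frobenius space of $A$ is the vector space of all such coproducts, and $\operatorname{Frobdim}A$ is its dimension over $\Bbbk$. *)

theory Defs
  imports Main "HOL-Computational_Algebra.Polynomial" "HOL-Library.Function_Algebras"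
begin

definition alg_closed :: "'k::field itself \<Rightarrow> bool" where
  "alg_closed _ \<longleftrightarrow> (\<forall>p::'k poly. 0 < degree p \<longrightarrow> (\<exists>x. poly p x = 0))"

definition k_algebra :: "('k::field \<Rightarrow> 'a::{ring,monoid_mult} \<Rightarrow> 'a) \<Rightarrow> bool" where
  "k_algebra sc \<longleftrightarrow> vector_space sc \<and>
     (\<forall>c x y. sc c (x * y) = sc c x * y \<and> sc c (x * y) = x * sc c y)"

text \<open>Concrete model of A \<otimes>_k A: the span of the pure tensors a \<otimes> b inside the space of
  k-valued functions on k-bilinear forms B : A \<times> A \<rightarrow> k, where (a \<otimes> b)(B) = B a b.
  (The canonical map A \<otimes> A \<rightarrow> Bil(A \<times> A, k)^* is injective, so this span is the tensor square.)\<close>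

definition bilin :: "('k::field \<Rightarrow> 'a::ab_group_add \<Rightarrow> 'a) \<Rightarrow> ('a \<Rightarrow> 'a \<Rightarrow> 'k) \<Rightarrow> bool" where
  "bilin sc B \<longleftrightarrow> (\<forall>y. Vector_Spaces.linear sc (*) (\<lambda>x. B x y)) \<and>
                  (\<forall>x. Vector_Spaces.linear sc (*) (B x))"

type_synonym ('a, 'k) tens = "('a \<Rightarrow> 'a \<Rightarrow> 'k) \<Rightarrow> 'k"

definition tscale :: "'k::field \<Rightarrow> ('a, 'k) tens \<Rightarrow> ('a, 'k) tens" where
  "tscale c t = (\<lambda>B. c * t B)"

definition tens :: "('k::field \<Rightarrow> 'a::ab_group_add \<Rightarrow> 'a) \<Rightarrow> 'a \<Rightarrow> 'a \<Rightarrow> ('a, 'k) tens" where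
  "tens sc a b = (\<lambda>B. if bilin sc B then B a b else 0)"

definition tensor_square :: "('k::field \<Rightarrow> 'a::ab_group_add \<Rightarrow> 'a) \<Rightarrow> ('a, 'k) tens set" where
  "tensor_square sc = module.span tscale (range (\<lambda>(a, b). tens sc a b))"

text \<open>Left action (a \<otimes> 1) \<cdot> t and right action t \<cdot> (1 \<otimes> b) of A on A \<otimes> A.\<close>

definition lact :: "('k::field \<Rightarrow> 'a::{ring,monoid_mult} \<Rightarrow> 'a) \<Rightarrow> 'a \<Rightarrow> ('a, 'k) tens \<Rightarrow> ('a, 'k) tens" where
  "lact sc a t = (\<lambda>B. if bilin sc B then t (\<lambda>x y. B (a * x) y) else 0)"

definition ract :: "('k::field \<Rightarrow> 'a::{ring,monoid_mult} \<Rightarrow> 'a) \<Rightarrow> 'a \<Rightarrow> ('a, 'k) tens \<Rightarrow> ('a, 'k) tens" where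
  "ract sc b t = (\<lambda>B. if bilin sc B then t (\<lambda>x y. B x (y * b)) else 0)"

definition nearly_frobenius_coproduct ::
  "('k::field \<Rightarrow> 'a::{ring,monoid_mult} \<Rightarrow> 'a) \<Rightarrow> ('a \<Rightarrow> ('a, 'k) tens) \<Rightarrow> bool" where
  "nearly_frobenius_coproduct sc \<Delta> \<longleftrightarrow>
     Vector_Spaces.linear sc tscale \<Delta> \<and>
     (\<forall>x. \<Delta> x \<in> tensor_square sc) \<and>
     (\<forall>a b. \<Delta> (a * b) = lact sc a (\<Delta> b) \<and> \<Delta> (a * b) = ract sc b (\<Delta> a))"

definition frobenius_space ::
  "('k::field \<Rightarrow> 'a::{ring,monoid_mult} \<Rightarrow> 'a) \<Rightarrow> ('a \<Rightarrow> ('a, 'k) tens) set" where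
  "frobenius_space sc = {\<Delta>. nearly_frobenius_coproduct sc \<Delta>}"

definition mscale :: "'k::field \<Rightarrow> ('a \<Rightarrow> ('a, 'k) tens) \<Rightarrow> ('a \<Rightarrow> ('a, 'k) tens)" where
  "mscale c \<Delta> = (\<lambda>x. tscale c (\<Delta> x))"

definition Frobdim :: "('k::field \<Rightarrow> 'a::{ring,monoid_mult} \<Rightarrow> 'a) \<Rightarrow> nat" where
  "Frobdim sc = vector_space.dim mscale (frobenius_space sc)"

text \<open>An element is X with X i j l the (j,l) entry of the i-th factor (i < r, j,l < n_i),
  all other values being 0.\<close>

definition pm_carrier :: "nat list \<Rightarrow> (nat \<Rightarrow> nat \<Rightarrow> nat \<Rightarrow> 'k::field) set" where
  "pm_carrier ns = {X. \<forall>i j l. X i j l \<noteq> 0 \<longrightarrow> i < length ns \<and> j < ns ! i \<and> l < ns ! i}"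

definition pm_mul :: "nat list \<Rightarrow> (nat \<Rightarrow> nat \<Rightarrow> nat \<Rightarrow> 'k::field) \<Rightarrow> (nat \<Rightarrow> nat \<Rightarrow> nat \<Rightarrow> 'k) \<Rightarrow> (nat \<Rightarrow> nat \<Rightarrow> nat \<Rightarrow> 'k)" where
  "pm_mul ns X Y = (\<lambda>i j l. if i < length ns \<and> j < ns ! i \<and> l < ns ! i
                             then (\<Sum>m<ns ! i. X i j m * Y i m l) else 0)"

definition pm_one :: "nat list \<Rightarrow> (nat \<Rightarrow> nat \<Rightarrow> nat \<Rightarrow> 'k::field)" where
  "pm_one ns = (\<lambda>i j l. if i < length ns \<and> j < ns ! i \<and> j = l then 1 else 0)"

definition iso_prod_matrix_algebras ::
  "('k::field \<Rightarrow> 'a::{ring,monoid_mult} \<Rightarrow> 'a) \<Rightarrow> nat list \<Rightarrow> bool" where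
  "iso_prod_matrix_algebras sc ns \<longleftrightarrow>
     (\<exists>\<phi> :: 'a \<Rightarrow> nat \<Rightarrow> nat \<Rightarrow> nat \<Rightarrow> 'k.
        bij_betw \<phi> UNIV (pm_carrier ns) \<and>
        (\<forall>x y. \<phi> (x + y) = (\<lambda>i j l. \<phi> x i j l + \<phi> y i j l)) \<and>
        (\<forall>c x. \<phi> (sc c x) = (\<lambda>i j l. c * \<phi> x i j l)) \<and>
        (\<forall>x y. \<phi> (x * y) = pm_mul ns (\<phi> x) (\<phi> y)) \<and>
        \<phi> 1 = pm_one ns)"

end

theory Submission
  imports Defs
begin

text \<open>
  Let \<open>E(i, j, l)\<close> be the matrix unit at entry \<open>(j, l)\<close> of the \<open>i\<close>-th factor of
  \<open>A = M\<^bsub>n_1\<^esub>(k) \<times> \<dots> \<times> M\<^bsub>n_r\<^esub>(k)\<close>. A nearly Frobenius coproduct satisfies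
  \<open>\<Delta>(a) = (a \<otimes> 1) \<Delta>(1) = \<Delta>(1) (1 \<otimes> a)\<close>; comparing both expressions on matrix units shows
  that \<open>\<Delta>\<close> is a linear combination, with coefficients read off from \<open>\<Delta>(1)\<close>, of the coproducts
  \<open>\<Delta>\<^bsub>i,p,q\<^esub>(x) = \<Sum>\<^sub>m x E(i, m, p) \<otimes> E(i, q, m)\<close>, one for each \<open>i\<close> and \<open>p, q < n_i\<close>.
  These \<open>\<Sum> n_i\<^sup>2\<close> coproducts are linearly independent: \<open>\<Delta>\<^bsub>i,p,q\<^esub>(E(i', 0, 0))\<close> has
  coefficient 1 at \<open>E(i', 0, p') \<otimes> E(i', q', 0)\<close> if \<open>(i, p, q) = (i', p', q')\<close> and 0 otherwise.
\<close>

lemma sum_apply: "(\<Sum>x\<in>A. f x) y = (\<Sum>x\<in>A. f x y)"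
  by (induction A rule: infinite_finite_induct) auto

lemma vector_space_field_mult: "vector_space ((*) :: 'k::field \<Rightarrow> 'k \<Rightarrow> 'k)"
  by unfold_locales (auto simp: algebra_simps)

lemma module_tscale: "module (tscale :: 'k::field \<Rightarrow> ('a, 'k) tens \<Rightarrow> ('a, 'k) tens)"
  by unfold_locales (auto simp: tscale_def algebra_simps fun_eq_iff)

lemma vector_space_tscale: "vector_space (tscale :: 'k::field \<Rightarrow> ('a, 'k) tens \<Rightarrow> ('a, 'k) tens)"
  using module_tscale module_iff_vector_space by blast

lemma vector_space_mscale: "vector_space (mscale :: 'k::field \<Rightarrow> ('a \<Rightarrow> ('a, 'k) tens) \<Rightarrow> _)"
  by unfold_locales (auto simp: mscale_def tscale_def algebra_simps fun_eq_iff)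

lemma tscale_apply [simp]: "tscale c t B = c * t B"
  by (simp add: tscale_def)

lemma mscale_apply [simp]: "mscale c \<Delta> x = tscale c (\<Delta> x)"
  by (simp add: mscale_def)

lemma bilin_sum_left:
  assumes "bilin sc B"
  shows "B (\<Sum>k\<in>K. sc (c k) (u k)) y = (\<Sum>k\<in>K. c k * B (u k) y)"
proof -
  interpret Vector_Spaces.linear sc "(*)" "\<lambda>x. B x y"
    using assms by (simp add: bilin_def)
  show ?thesis by (simp add: sum scale)
qed

lemma bilin_sum_right:
  assumes "bilin sc B"
  shows "B x (\<Sum>k\<in>K. sc (c k) (u k)) = (\<Sum>k\<in>K. c k * B x (u k))"
proof -
  interpret Vector_Spaces.linear sc "(*)" "B x"
    using assms by (simp add: bilin_def)
  show ?thesis by (simp add: sum scale)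
qed

lemma bilin_mult_left:
  assumes "k_algebra sc" and "bilin sc B"
  shows "bilin sc (\<lambda>x y. B (a * x) y)"
proof -
  have "Vector_Spaces.linear sc (*) (\<lambda>x. B (a * x) y)" for y
  proof -
    interpret Vector_Spaces.linear sc "(*)" "\<lambda>x. B x y"
      using assms(2) by (simp add: bilin_def)
    have "vector_space sc" and comm: "sc c (a * x) = a * sc c x" for c x
      using assms(1) unfolding k_algebra_def by metis+
    then show ?thesis
      using vector_space_field_mult
      by (simp add: Vector_Spaces.linear_iff distrib_left add scale flip: comm)
  qed
  then show ?thesis using assms(2) by (simp add: bilin_def)
qed

lemma bilin_mult_right:
  assumes "k_algebra sc" and "bilin sc B"
  shows "bilin sc (\<lambda>x y. B x (y * b))"
proof -
  have "Vector_Spaces.linear sc (*) (\<lambda>y. B x (y * b))" for x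
  proof -
    interpret Vector_Spaces.linear sc "(*)" "B x"
      using assms(2) by (simp add: bilin_def)
    have "vector_space sc" and comm: "sc c (y * b) = sc c y * b" for c y
      using assms(1) unfolding k_algebra_def by metis+
    then show ?thesis
      using vector_space_field_mult
      by (simp add: Vector_Spaces.linear_iff distrib_right add scale flip: comm)
  qed
  then show ?thesis using assms(2) by (simp add: bilin_def)
qed

lemma tens_sum_left:
  "tens sc (\<Sum>k\<in>K. sc (c k) (u k)) v = (\<Sum>k\<in>K. tscale (c k) (tens sc (u k) v))"
  by (auto simp: fun_eq_iff tens_def sum_apply bilin_sum_left)

lemma tens_sum_right:
  "tens sc u (\<Sum>k\<in>K. sc (c k) (v k)) = (\<Sum>k\<in>K. tscale (c k) (tens sc u (v k)))"
  by (auto simp: fun_eq_iff tens_def sum_apply bilin_sum_right)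

lemma lact_tens: "k_algebra sc \<Longrightarrow> lact sc a (tens sc u v) = tens sc (a * u) v"
  by (auto simp: fun_eq_iff lact_def tens_def bilin_mult_left)

lemma ract_tens: "k_algebra sc \<Longrightarrow> ract sc b (tens sc u v) = tens sc u (v * b)"
  by (auto simp: fun_eq_iff ract_def tens_def bilin_mult_right)

lemma lact_sum: "lact sc a (\<Sum>k\<in>K. t k) = (\<Sum>k\<in>K. lact sc a (t k))"
  by (auto simp: fun_eq_iff lact_def sum_apply)

lemma ract_sum: "ract sc b (\<Sum>k\<in>K. t k) = (\<Sum>k\<in>K. ract sc b (t k))"
  by (auto simp: fun_eq_iff ract_def sum_apply)

lemma tens_in_tensor_square: "tens sc a b \<in> tensor_square sc"
  unfolding tensor_square_def by (rule module.span_base[OF module_tscale]) auto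

lemma tensor_square_sum:
  "(\<And>k. k \<in> K \<Longrightarrow> t k \<in> tensor_square sc) \<Longrightarrow> (\<Sum>k\<in>K. t k) \<in> tensor_square sc"
  unfolding tensor_square_def by (rule module.span_sum[OF module_tscale])

lemma tensor_square_scale: "t \<in> tensor_square sc \<Longrightarrow> tscale c t \<in> tensor_square sc"
  unfolding tensor_square_def by (rule module.span_scale[OF module_tscale])

locale matrix_coordinates =
  fixes sc :: "'k::field \<Rightarrow> 'a::{ring,monoid_mult} \<Rightarrow> 'a" and ns :: "nat list"
    and \<phi> :: "'a \<Rightarrow> nat \<Rightarrow> nat \<Rightarrow> nat \<Rightarrow> 'k"
  assumes k_algebra: "k_algebra sc" and ns_pos: "\<forall>n\<in>set ns. 0 < n"
    and bij: "bij_betw \<phi> UNIV (pm_carrier ns)"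
    and \<phi>_add: "\<And>x y. \<phi> (x + y) = (\<lambda>i j l. \<phi> x i j l + \<phi> y i j l)"
    and \<phi>_scale: "\<And>c x. \<phi> (sc c x) = (\<lambda>i j l. c * \<phi> x i j l)"
    and \<phi>_mult: "\<And>x y. \<phi> (x * y) = pm_mul ns (\<phi> x) (\<phi> y)"
begin

definition entries :: "(nat \<times> nat \<times> nat) set" where
  "entries = {(i, j, l). i < length ns \<and> j < ns ! i \<and> l < ns ! i}"

definition coord :: "'a \<Rightarrow> nat \<times> nat \<times> nat \<Rightarrow> 'k" where
  "coord x = (\<lambda>(i, j, l). \<phi> x i j l)"

definition matrix_unit :: "nat \<times> nat \<times> nat \<Rightarrow> 'a" where
  "matrix_unit \<alpha> = inv_into UNIV \<phi> (\<lambda>i j l. if (i, j, l) = \<alpha> then 1 else 0)"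

lemma entries_iff [simp]: "(i, j, l) \<in> entries \<longleftrightarrow> i < length ns \<and> j < ns ! i \<and> l < ns ! i"
  by (simp add: entries_def)

lemma finite_entries [simp]: "finite entries"
  and card_entries: "card entries = (\<Sum>i<length ns. (ns ! i)^2)"
proof -
  have "entries = Sigma {..<length ns} (\<lambda>i. {..<ns ! i} \<times> {..<ns ! i})"
    by (auto simp: entries_def)
  then show "finite entries" and "card entries = (\<Sum>i<length ns. (ns ! i)^2)"
    by (simp_all add: power2_eq_square)
qed

lemma coord_add [simp]: "coord (x + y) \<alpha> = coord x \<alpha> + coord y \<alpha>"
  by (cases \<alpha>) (simp add: coord_def \<phi>_add)

lemma coord_scale [simp]: "coord (sc c x) \<alpha> = c * coord x \<alpha>"
  by (cases \<alpha>) (simp add: coord_def \<phi>_scale)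

lemma coord_zero [simp]: "coord 0 \<alpha> = 0"
  by (metis add.right_neutral add_cancel_right_right coord_add)

lemma coord_sum: "coord (\<Sum>k\<in>K. x k) \<alpha> = (\<Sum>k\<in>K. coord (x k) \<alpha>)"
  by (induction K rule: infinite_finite_induct) auto

lemma coord_mult:
  "coord (x * y) (i, j, l) =
     (if (i, j, l) \<in> entries then \<Sum>m<ns ! i. coord x (i, j, m) * coord y (i, m, l) else 0)"
  by (simp add: coord_def \<phi>_mult pm_mul_def)

lemma coord_eqI:
  assumes "\<And>\<alpha>. \<alpha> \<in> entries \<Longrightarrow> coord x \<alpha> = coord y \<alpha>"
  shows "x = y"
proof -
  have carrier: "\<phi> z \<in> pm_carrier ns" for z
    using bij by (auto simp: bij_betw_def)
  have "coord z \<alpha> = 0" if "\<alpha> \<notin> entries" for z \<alpha>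
    using that carrier[of z] by (cases \<alpha>) (auto simp: pm_carrier_def coord_def)
  then have "coord x \<alpha> = coord y \<alpha>" for \<alpha>
    using assms by (cases "\<alpha> \<in> entries") auto
  then have "\<phi> x = \<phi> y"
    by (auto simp: fun_eq_iff coord_def split: prod.splits)
  then show ?thesis
    using bij by (auto simp: bij_betw_def inj_on_def)
qed

lemma coord_matrix_unit:
  assumes "\<alpha> \<in> entries"
  shows "coord (matrix_unit \<alpha>) \<beta> = (if \<beta> = \<alpha> then 1 else 0)"
proof -
  have "(\<lambda>i j l. if (i, j, l) = \<alpha> then 1 else 0) \<in> pm_carrier ns"
    using assms by (auto simp: pm_carrier_def)
  then have "\<phi> (matrix_unit \<alpha>) = (\<lambda>i j l. if (i, j, l) = \<alpha> then 1 else 0)"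
    unfolding matrix_unit_def by (rule bij_betw_inv_into_right[OF bij])
  then show ?thesis
    by (cases \<beta>) (simp add: coord_def)
qed

lemma matrix_unit_expansion: "x = (\<Sum>\<alpha>\<in>entries. sc (coord x \<alpha>) (matrix_unit \<alpha>))"
proof (rule coord_eqI)
  fix \<beta> assume "\<beta> \<in> entries"
  have "coord (\<Sum>\<alpha>\<in>entries. sc (coord x \<alpha>) (matrix_unit \<alpha>)) \<beta> =
      (\<Sum>\<alpha>\<in>entries. coord x \<alpha> * coord (matrix_unit \<alpha>) \<beta>)"
    by (simp add: coord_sum)
  also have "\<dots> = (\<Sum>\<alpha>\<in>entries. if \<beta> = \<alpha> then coord x \<beta> else 0)"
    by (rule sum.cong) (auto simp: coord_matrix_unit)
  also have "\<dots> = coord x \<beta>"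
    using \<open>\<beta> \<in> entries\<close> by simp
  finally show "coord x \<beta> = coord (\<Sum>\<alpha>\<in>entries. sc (coord x \<alpha>) (matrix_unit \<alpha>)) \<beta>" ..
qed

lemma coord_matrix_unit_mult:
  assumes "(s, u, v) \<in> entries" and "(i, j, l) \<in> entries"
  shows "coord (matrix_unit (s, u, v) * x) (i, j, l) = (if i = s \<and> j = u then coord x (s, v, l) else 0)"
proof -
  have "coord (matrix_unit (s, u, v) * x) (i, j, l) =
      (\<Sum>m<ns ! i. if m = v \<and> i = s \<and> j = u then coord x (s, v, l) else 0)"
    using assms by (auto simp: coord_mult coord_matrix_unit intro!: sum.cong)
  also have "\<dots> = (if i = s \<and> j = u then coord x (s, v, l) else 0)"
    using assms by (auto simp: sum.delta' if_distrib cong: if_cong)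
  finally show ?thesis .
qed

lemma coord_mult_matrix_unit:
  assumes "(s, u, v) \<in> entries" and "(i, j, l) \<in> entries"
  shows "coord (x * matrix_unit (s, u, v)) (i, j, l) = (if i = s \<and> l = v then coord x (s, j, u) else 0)"
proof -
  have "coord (x * matrix_unit (s, u, v)) (i, j, l) =
      (\<Sum>m<ns ! i. if m = u \<and> i = s \<and> l = v then coord x (s, j, u) else 0)"
    using assms by (auto simp: coord_mult coord_matrix_unit intro!: sum.cong)
  also have "\<dots> = (if i = s \<and> l = v then coord x (s, j, u) else 0)"
    using assms by (auto simp: sum.delta' if_distrib cong: if_cong)
  finally show ?thesis .
qed

lemma mult_matrix_unit:
  assumes "(i, m, p) \<in> entries"
  shows "x * matrix_unit (i, m, p) = (\<Sum>j<ns ! i. sc (coord x (i, j, m)) (matrix_unit (i, j, p)))"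
proof (rule coord_eqI)
  fix \<beta> assume "\<beta> \<in> entries"
  then show "coord (x * matrix_unit (i, m, p)) \<beta> =
      coord (\<Sum>j<ns ! i. sc (coord x (i, j, m)) (matrix_unit (i, j, p))) \<beta>"
    using assms
    by (cases \<beta>) (auto simp: coord_mult_matrix_unit coord_sum coord_matrix_unit if_distrib cong: if_cong)
qed

lemma matrix_unit_mult:
  assumes "(i, q, j) \<in> entries"
  shows "matrix_unit (i, q, j) * x = (\<Sum>m<ns ! i. sc (coord x (i, j, m)) (matrix_unit (i, q, m)))"
proof (rule coord_eqI)
  fix \<beta> assume "\<beta> \<in> entries"
  then show "coord (matrix_unit (i, q, j) * x) \<beta> =
      coord (\<Sum>m<ns ! i. sc (coord x (i, j, m)) (matrix_unit (i, q, m))) \<beta>"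
    using assms
    by (cases \<beta>) (auto simp: coord_matrix_unit_mult coord_sum coord_matrix_unit if_distrib cong: if_cong)
qed

definition coord_form :: "nat \<times> nat \<times> nat \<Rightarrow> nat \<times> nat \<times> nat \<Rightarrow> 'a \<Rightarrow> 'a \<Rightarrow> 'k" where
  "coord_form \<alpha> \<beta> x y = coord x \<alpha> * coord y \<beta>"

lemma bilin_coord_form: "bilin sc (coord_form \<alpha> \<beta>)"
  using k_algebra vector_space_field_mult
  by (simp add: bilin_def coord_form_def k_algebra_def Vector_Spaces.linear_iff algebra_simps)

lemma tens_coord_form [simp]: "tens sc a b (coord_form \<alpha> \<beta>) = coord a \<alpha> * coord b \<beta>"
  by (simp add: tens_def bilin_coord_form coord_form_def)

lemma bilin_expansion:
  assumes "bilin sc B"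
  shows "B x y =
    (\<Sum>\<alpha>\<in>entries. \<Sum>\<beta>\<in>entries. coord x \<alpha> * coord y \<beta> * B (matrix_unit \<alpha>) (matrix_unit \<beta>))"
proof -
  have "B x y =
      B (\<Sum>\<alpha>\<in>entries. sc (coord x \<alpha>) (matrix_unit \<alpha>)) (\<Sum>\<beta>\<in>entries. sc (coord y \<beta>) (matrix_unit \<beta>))"
    by (rule arg_cong2[where f = B]; rule matrix_unit_expansion)
  also have "\<dots> =
      (\<Sum>\<alpha>\<in>entries. coord x \<alpha> * B (matrix_unit \<alpha>) (\<Sum>\<beta>\<in>entries. sc (coord y \<beta>) (matrix_unit \<beta>)))"
    by (rule bilin_sum_left[OF assms])
  finally show ?thesis
    by (simp add: bilin_sum_right[OF assms] sum_distrib_left mult.assoc)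
qed

lemma tensor_square_expansion:
  assumes "t \<in> tensor_square sc"
  shows "t B = (\<Sum>\<alpha>\<in>entries. \<Sum>\<beta>\<in>entries.
                  t (coord_form \<alpha> \<beta>) * tens sc (matrix_unit \<alpha>) (matrix_unit \<beta>) B)"
proof -
  interpret m: module tscale by (rule module_tscale)
  have "\<forall>B. t B = (\<Sum>\<alpha>\<in>entries. \<Sum>\<beta>\<in>entries.
                  t (coord_form \<alpha> \<beta>) * tens sc (matrix_unit \<alpha>) (matrix_unit \<beta>) B)"
    using assms unfolding tensor_square_def
  proof (induction rule: m.span_induct_alt)
    case base
    then show ?case by simp
  next
    case (step c x y)
    then obtain a b where x: "x = tens sc a b" by auto
    let ?exp = "\<lambda>t B. \<Sum>\<alpha>\<in>entries. \<Sum>\<beta>\<in>entries. t (coord_form \<alpha> \<beta>) * tens sc (matrix_unit \<alpha>) (matrix_unit \<beta>) B"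
    show ?case
    proof
      fix B
      have "x B = ?exp x B"
        by (cases "bilin sc B") (simp_all add: x tens_def bilin_coord_form coord_form_def bilin_expansion[of B a b])
      then have "(tscale c x + y) B = c * ?exp x B + ?exp y B"
        using step.IH[rule_format, of B] by (simp only: plus_fun_apply tscale_apply)
      also have "\<dots> = ?exp (tscale c x + y) B"
        by (simp add: sum_distrib_left ring_distribs sum.distrib mult.assoc)
      finally show "(tscale c x + y) B = ?exp (tscale c x + y) B" .
    qed
  qed
  then show ?thesis ..
qed

lemma tensor_square_eqI:
  assumes "t \<in> tensor_square sc" and "t' \<in> tensor_square sc"
    and "\<And>\<alpha> \<beta>. \<alpha> \<in> entries \<Longrightarrow> \<beta> \<in> entries \<Longrightarrow> t (coord_form \<alpha> \<beta>) = t' (coord_form \<alpha> \<beta>)"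
  shows "t = t'"
proof
  fix B
  show "t B = t' B"
    using tensor_square_expansion[OF assms(1), of B] tensor_square_expansion[OF assms(2), of B] assms(3)
    by (simp cong: sum.cong)
qed

lemma tensor_square_zero_form: "t \<in> tensor_square sc \<Longrightarrow> t (\<lambda>x y. 0) = 0"
  by (subst tensor_square_expansion) (auto simp: tens_def)

lemma lact_matrix_unit_coord_form:
  assumes "t \<in> tensor_square sc" and "(s, u, v) \<in> entries" and "(i, j, l) \<in> entries"
  shows "lact sc (matrix_unit (s, u, v)) t (coord_form (i, j, l) \<beta>) =
           (if i = s \<and> j = u then t (coord_form (s, v, l) \<beta>) else 0)"
proof -
  have "(\<lambda>x y. coord_form (i, j, l) \<beta> (matrix_unit (s, u, v) * x) y) =
      (if i = s \<and> j = u then coord_form (s, v, l) \<beta> else (\<lambda>x y. 0))"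
    using assms(2,3) by (auto simp: fun_eq_iff coord_form_def coord_matrix_unit_mult)
  then show ?thesis
    using tensor_square_zero_form[OF assms(1)] by (simp add: lact_def bilin_coord_form)
qed

lemma ract_matrix_unit_coord_form:
  assumes "t \<in> tensor_square sc" and "(s, u, v) \<in> entries" and "(i, j, l) \<in> entries"
  shows "ract sc (matrix_unit (s, u, v)) t (coord_form \<alpha> (i, j, l)) =
           (if i = s \<and> l = v then t (coord_form \<alpha> (s, j, u)) else 0)"
proof -
  have "(\<lambda>x y. coord_form \<alpha> (i, j, l) x (y * matrix_unit (s, u, v))) =
      (if i = s \<and> l = v then coord_form \<alpha> (s, j, u) else (\<lambda>x y. 0))"
    using assms(2,3) by (auto simp: fun_eq_iff coord_form_def coord_mult_matrix_unit)
  then show ?thesis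
    using tensor_square_zero_form[OF assms(1)] by (simp add: ract_def bilin_coord_form)
qed

text \<open>The definition makes left \<open>A\<close>-linearity evident; the equivalent form
  \<open>\<Sum>\<^sub>j E(i, j, p) \<otimes> E(i, q, j) x\<close> (\<open>elementary_coproduct_right\<close>) does the same on the right.\<close>

definition elementary_coproduct :: "nat \<times> nat \<times> nat \<Rightarrow> 'a \<Rightarrow> ('a, 'k) tens" where
  "elementary_coproduct = (\<lambda>(i, p, q) x.
     \<Sum>m<ns ! i. tens sc (x * matrix_unit (i, m, p)) (matrix_unit (i, q, m)))"

lemma elementary_coproduct_coords:
  assumes "(i, p, q) \<in> entries"
  shows "elementary_coproduct (i, p, q) x =
    (\<Sum>j<ns ! i. \<Sum>m<ns ! i. tscale (coord x (i, j, m)) (tens sc (matrix_unit (i, j, p)) (matrix_unit (i, q, m))))"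
proof -
  have "tens sc (x * matrix_unit (i, m, p)) (matrix_unit (i, q, m)) =
      (\<Sum>j<ns ! i. tscale (coord x (i, j, m)) (tens sc (matrix_unit (i, j, p)) (matrix_unit (i, q, m))))"
    if "m < ns ! i" for m
    using assms that by (simp only: mult_matrix_unit entries_iff tens_sum_left[of sc])
  then have "elementary_coproduct (i, p, q) x =
      (\<Sum>m<ns ! i. \<Sum>j<ns ! i. tscale (coord x (i, j, m)) (tens sc (matrix_unit (i, j, p)) (matrix_unit (i, q, m))))"
    unfolding elementary_coproduct_def by simp
  also have "\<dots> = (\<Sum>j<ns ! i. \<Sum>m<ns ! i. tscale (coord x (i, j, m)) (tens sc (matrix_unit (i, j, p)) (matrix_unit (i, q, m))))"
    by (rule sum.swap)
  finally show ?thesis .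
qed

lemma elementary_coproduct_right:
  assumes "(i, p, q) \<in> entries"
  shows "elementary_coproduct (i, p, q) x =
    (\<Sum>j<ns ! i. tens sc (matrix_unit (i, j, p)) (matrix_unit (i, q, j) * x))"
proof -
  have "tens sc (matrix_unit (i, j, p)) (matrix_unit (i, q, j) * x) =
      (\<Sum>m<ns ! i. tscale (coord x (i, j, m)) (tens sc (matrix_unit (i, j, p)) (matrix_unit (i, q, m))))"
    if "j < ns ! i" for j
    using assms that by (simp only: matrix_unit_mult entries_iff tens_sum_right[of sc])
  then show ?thesis
    by (simp add: elementary_coproduct_coords[OF assms])
qed

lemma elementary_coproduct_coord_form:
  assumes "(i, p, q) \<in> entries" and "(a1, a2, a3) \<in> entries" and "(b1, b2, b3) \<in> entries"
  shows "elementary_coproduct (i, p, q) x (coord_form (a1, a2, a3) (b1, b2, b3)) =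
           (if a1 = i \<and> a3 = p \<and> b1 = i \<and> b2 = q then coord x (i, a2, b3) else 0)"
proof -
  have "elementary_coproduct (i, p, q) x (coord_form (a1, a2, a3) (b1, b2, b3)) =
      (\<Sum>m<ns ! i. if m = b3 \<and> a1 = i \<and> a3 = p \<and> b1 = i \<and> b2 = q then coord x (i, a2, b3) else 0)"
    unfolding elementary_coproduct_def using assms
    by (auto simp: sum_apply coord_mult_matrix_unit coord_matrix_unit intro!: sum.cong)
  then show ?thesis
    using assms by auto
qed

lemma elementary_coproduct_in_tensor_square: "elementary_coproduct \<gamma> x \<in> tensor_square sc"
  by (cases \<gamma>) (auto simp: elementary_coproduct_def intro!: tensor_square_sum tens_in_tensor_square)

lemma elementary_coproduct_in_frobenius_space:
  assumes "\<gamma> \<in> entries"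
  shows "elementary_coproduct \<gamma> \<in> frobenius_space sc"
proof -
  obtain i p q where \<gamma>: "\<gamma> = (i, p, q)" by (cases \<gamma>)
  have "Vector_Spaces.linear sc tscale (elementary_coproduct \<gamma>)"
    using assms k_algebra vector_space_tscale unfolding \<gamma> k_algebra_def
    by (auto simp: Vector_Spaces.linear_iff elementary_coproduct_coords fun_eq_iff sum_apply
        ring_distribs sum.distrib sum_distrib_left mult.assoc)
  moreover have "elementary_coproduct \<gamma> x \<in> tensor_square sc" for x
    by (rule elementary_coproduct_in_tensor_square)
  moreover have "elementary_coproduct \<gamma> (a * b) = lact sc a (elementary_coproduct \<gamma> b)" for a b
    unfolding \<gamma> elementary_coproduct_def by (simp add: lact_sum lact_tens[OF k_algebra] mult.assoc)
  moreover have "elementary_coproduct \<gamma> (a * b) = ract sc b (elementary_coproduct \<gamma> a)" for a b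
    using assms unfolding \<gamma>
    by (simp add: elementary_coproduct_right ract_sum ract_tens[OF k_algebra] mult.assoc)
  ultimately show ?thesis
    unfolding frobenius_space_def nearly_frobenius_coproduct_def by blast
qed

lemma frobenius_coproduct_matrix_unit:
  assumes "\<Delta> \<in> frobenius_space sc"
    and "(s, u, v) \<in> entries" and "(a1, a2, a3) \<in> entries" and "(b1, b2, b3) \<in> entries"
  shows "\<Delta> (matrix_unit (s, u, v)) (coord_form (a1, a2, a3) (b1, b2, b3)) =
    (if a1 = s \<and> a2 = u \<and> b1 = s \<and> b3 = v then \<Delta> 1 (coord_form (s, 0, a3) (s, b2, 0)) else 0)"
proof -
  have T: "\<Delta> 1 \<in> tensor_square sc"
    and bimod: "\<And>a b. \<Delta> (a * b) = lact sc a (\<Delta> b) \<and> \<Delta> (a * b) = ract sc b (\<Delta> a)"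
    using assms(1) unfolding frobenius_space_def nearly_frobenius_coproduct_def by blast+
  have left: "\<Delta> (matrix_unit (s', u', v')) (coord_form (i, j, l) \<beta>) =
      (if i = s' \<and> j = u' then \<Delta> 1 (coord_form (s', v', l) \<beta>) else 0)"
    if "(s', u', v') \<in> entries" "(i, j, l) \<in> entries" for s' u' v' i j l \<beta>
    using bimod[of "matrix_unit (s', u', v')" 1] lact_matrix_unit_coord_form[OF T that] by simp
  have right: "\<Delta> (matrix_unit (s', u', v')) (coord_form \<alpha> (i, j, l)) =
      (if i = s' \<and> l = v' then \<Delta> 1 (coord_form \<alpha> (s', j, u')) else 0)"
    if "(s', u', v') \<in> entries" "(i, j, l) \<in> entries" for s' u' v' i j l \<alpha>
    using bimod[of 1 "matrix_unit (s', u', v')"] ract_matrix_unit_coord_form[OF T that] by simp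
  show ?thesis
  proof (cases "a1 = s \<and> a2 = u \<and> b1 = s \<and> b3 = v")
    case True
    have "0 < ns ! s"
      using assms(2) ns_pos by simp
    then have in_entries: "(s, v, 0) \<in> entries" "(s, v, a3) \<in> entries" "(s, b2, 0) \<in> entries"
      using assms True by auto
    \<comment> \<open>Evaluating \<open>\<Delta>(E(s, v, 0))\<close> via the right and via the left action trades both \<open>v\<close>'s for \<open>0\<close>.\<close>
    have "\<Delta> (matrix_unit (s, u, v)) (coord_form (a1, a2, a3) (b1, b2, b3)) =
        \<Delta> 1 (coord_form (s, v, a3) (s, b2, v))"
      using left[OF assms(2,3)] True by simp
    also have "\<dots> = \<Delta> (matrix_unit (s, v, 0)) (coord_form (s, v, a3) (s, b2, 0))"
      using right[OF in_entries(1) in_entries(3)] by simp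
    also have "\<dots> = \<Delta> 1 (coord_form (s, 0, a3) (s, b2, 0))"
      using left[OF in_entries(1) in_entries(2)] by simp
    finally show ?thesis
      using True by simp
  next
    case False
    then show ?thesis
      using left[OF assms(2,3), of "(b1, b2, b3)"] right[OF assms(2,4), of "(a1, a2, a3)"] by auto
  qed
qed

definition frobenius_coeff :: "('a \<Rightarrow> ('a, 'k) tens) \<Rightarrow> nat \<times> nat \<times> nat \<Rightarrow> 'k" where
  "frobenius_coeff \<Delta> = (\<lambda>(i, p, q). \<Delta> 1 (coord_form (i, 0, p) (i, q, 0)))"

lemma frobenius_coproduct_coord_form:
  assumes "\<Delta> \<in> frobenius_space sc" and "(a1, a2, a3) \<in> entries" and "(b1, b2, b3) \<in> entries"
  shows "\<Delta> x (coord_form (a1, a2, a3) (b1, b2, b3)) =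
           (if b1 = a1 then coord x (a1, a2, b3) * frobenius_coeff \<Delta> (a1, a3, b2) else 0)"
    (is "_ = ?c")
proof -
  interpret Vector_Spaces.linear sc tscale \<Delta>
    using assms(1) by (simp add: frobenius_space_def nearly_frobenius_coproduct_def)
  have "\<Delta> x = (\<Sum>\<rho>\<in>entries. tscale (coord x \<rho>) (\<Delta> (matrix_unit \<rho>)))"
    by (subst matrix_unit_expansion[of x]) (simp add: sum scale)
  then have "\<Delta> x (coord_form (a1, a2, a3) (b1, b2, b3)) =
      (\<Sum>\<rho>\<in>entries. coord x \<rho> * \<Delta> (matrix_unit \<rho>) (coord_form (a1, a2, a3) (b1, b2, b3)))"
    by (simp add: sum_apply)
  also have "\<dots> = (\<Sum>\<rho>\<in>entries. if \<rho> = (a1, a2, b3) then ?c else 0)"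
  proof (rule sum.cong[OF refl])
    fix \<rho> assume "\<rho> \<in> entries"
    then show "coord x \<rho> * \<Delta> (matrix_unit \<rho>) (coord_form (a1, a2, a3) (b1, b2, b3)) =
        (if \<rho> = (a1, a2, b3) then ?c else 0)"
      using assms by (cases \<rho>) (auto simp: frobenius_coproduct_matrix_unit frobenius_coeff_def)
  qed
  also have "\<dots> = ?c"
    using assms(2,3) by auto
  finally show ?thesis .
qed

lemma elementary_coproducts_coord_form:
  assumes "(a1, a2, a3) \<in> entries" and "(b1, b2, b3) \<in> entries"
  shows "(\<Sum>\<gamma>\<in>entries. c \<gamma> * elementary_coproduct \<gamma> x (coord_form (a1, a2, a3) (b1, b2, b3))) =
           (if b1 = a1 then coord x (a1, a2, b3) * c (a1, a3, b2) else 0)"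
    (is "_ = ?c")
proof -
  have "(\<Sum>\<gamma>\<in>entries. c \<gamma> * elementary_coproduct \<gamma> x (coord_form (a1, a2, a3) (b1, b2, b3))) =
      (\<Sum>\<gamma>\<in>entries. if \<gamma> = (a1, a3, b2) then ?c else 0)"
  proof (rule sum.cong[OF refl])
    fix \<gamma> assume "\<gamma> \<in> entries"
    then show "c \<gamma> * elementary_coproduct \<gamma> x (coord_form (a1, a2, a3) (b1, b2, b3)) =
        (if \<gamma> = (a1, a3, b2) then ?c else 0)"
      using assms by (cases \<gamma>) (auto simp: elementary_coproduct_coord_form)
  qed
  also have "\<dots> = ?c"
    using assms by auto
  finally show ?thesis .
qed

lemma frobenius_space_expansion:
  assumes "\<Delta> \<in> frobenius_space sc"
  shows "\<Delta> = (\<Sum>\<gamma>\<in>entries. mscale (frobenius_coeff \<Delta> \<gamma>) (elementary_coproduct \<gamma>))"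
proof
  fix x
  show "\<Delta> x = (\<Sum>\<gamma>\<in>entries. mscale (frobenius_coeff \<Delta> \<gamma>) (elementary_coproduct \<gamma>)) x"
  proof (rule tensor_square_eqI)
    show "\<Delta> x \<in> tensor_square sc"
      using assms by (simp add: frobenius_space_def nearly_frobenius_coproduct_def)
    show "(\<Sum>\<gamma>\<in>entries. mscale (frobenius_coeff \<Delta> \<gamma>) (elementary_coproduct \<gamma>)) x \<in> tensor_square sc"
      by (auto simp: sum_apply intro!: tensor_square_sum tensor_square_scale elementary_coproduct_in_tensor_square)
    fix \<alpha> \<beta> assume "\<alpha> \<in> entries" and "\<beta> \<in> entries"
    then show "\<Delta> x (coord_form \<alpha> \<beta>) =
        (\<Sum>\<gamma>\<in>entries. mscale (frobenius_coeff \<Delta> \<gamma>) (elementary_coproduct \<gamma>)) x (coord_form \<alpha> \<beta>)"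
      using frobenius_coproduct_coord_form[OF assms] elementary_coproducts_coord_form
      by (cases \<alpha>; cases \<beta>) (simp add: sum_apply)
  qed
qed

lemma elementary_coproduct_dual:
  assumes "(i, p, q) \<in> entries" and "(i', p', q') \<in> entries"
  shows "elementary_coproduct (i, p, q) (matrix_unit (i', 0, 0)) (coord_form (i', 0, p') (i', q', 0)) =
           (if (i, p, q) = (i', p', q') then 1 else 0)"
proof -
  have "0 < ns ! i'"
    using assms(2) ns_pos by simp
  then show ?thesis
    using assms by (auto simp: elementary_coproduct_coord_form coord_matrix_unit)
qed

lemma inj_on_elementary_coproduct: "inj_on elementary_coproduct entries"
proof (rule inj_onI)
  fix \<gamma> \<gamma>'
  assume "\<gamma> \<in> entries" "\<gamma>' \<in> entries" and eq: "elementary_coproduct \<gamma> = elementary_coproduct \<gamma>'"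
  then obtain i p q i' p' q' where "\<gamma> = (i, p, q)" "\<gamma>' = (i', p', q')" "(i, p, q) \<in> entries" "(i', p', q') \<in> entries"
    by (cases \<gamma>; cases \<gamma>') auto
  then show "\<gamma> = \<gamma>'"
    using eq elementary_coproduct_dual[of i p q i' p' q'] elementary_coproduct_dual[of i' p' q' i' p' q']
    by (auto split: if_splits)
qed

lemma independent_elementary_coproducts: "\<not> module.dependent mscale (elementary_coproduct ` entries)"
proof -
  interpret v: vector_space "mscale :: 'k \<Rightarrow> ('a \<Rightarrow> ('a, 'k) tens) \<Rightarrow> _"
    by (rule vector_space_mscale)
  have "f \<Delta> = 0"
    if sum: "(\<Sum>\<Delta>\<in>elementary_coproduct ` entries. mscale (f \<Delta>) \<Delta>) = 0"
      and "\<Delta> \<in> elementary_coproduct ` entries" for f \<Delta>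
  proof -
    from that(2) obtain i' p' q' where \<gamma>': "(i', p', q') \<in> entries" and \<Delta>: "\<Delta> = elementary_coproduct (i', p', q')"
      by auto
    let ?ev = "\<lambda>\<Delta>. \<Delta> (matrix_unit (i', 0, 0)) (coord_form (i', 0, p') (i', q', 0))"
    have "0 = ?ev (\<Sum>\<gamma>\<in>entries. mscale (f (elementary_coproduct \<gamma>)) (elementary_coproduct \<gamma>))"
      using sum by (simp add: sum.reindex[OF inj_on_elementary_coproduct])
    also have "\<dots> = (\<Sum>\<gamma>\<in>entries. f (elementary_coproduct \<gamma>) * ?ev (elementary_coproduct \<gamma>))"
      by (simp add: sum_apply)
    also have "\<dots> = (\<Sum>\<gamma>\<in>entries. if \<gamma> = (i', p', q') then f \<Delta> else 0)"
    proof (rule sum.cong[OF refl])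
      fix \<gamma> assume "\<gamma> \<in> entries"
      then show "f (elementary_coproduct \<gamma>) * ?ev (elementary_coproduct \<gamma>) =
          (if \<gamma> = (i', p', q') then f \<Delta> else 0)"
        using \<gamma>' by (cases \<gamma>) (auto simp: \<Delta> elementary_coproduct_dual)
    qed
    also have "\<dots> = f \<Delta>"
      using \<gamma>' by simp
    finally show "f \<Delta> = 0"
      by simp
  qed
  then show ?thesis
    by (intro v.independent_if_scalars_zero) simp_all
qed

lemma Frobdim_eq_card_entries: "Frobdim sc = card entries"
proof -
  interpret v: vector_space "mscale :: 'k \<Rightarrow> ('a \<Rightarrow> ('a, 'k) tens) \<Rightarrow> _"
    by (rule vector_space_mscale)
  have "frobenius_space sc \<subseteq> v.span (elementary_coproduct ` entries)"
  proof
    fix \<Delta> assume "\<Delta> \<in> frobenius_space sc"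
    then have "\<Delta> = (\<Sum>\<gamma>\<in>entries. mscale (frobenius_coeff \<Delta> \<gamma>) (elementary_coproduct \<gamma>))"
      by (rule frobenius_space_expansion)
    also have "\<dots> \<in> v.span (elementary_coproduct ` entries)"
      by (intro v.span_sum v.span_scale v.span_base imageI)
    finally show "\<Delta> \<in> v.span (elementary_coproduct ` entries)" .
  qed
  then have "v.dim (frobenius_space sc) = card (elementary_coproduct ` entries)"
    using elementary_coproduct_in_frobenius_space independent_elementary_coproducts
    by (intro v.dim_unique) auto
  then show ?thesis
    by (simp add: Frobdim_def card_image[OF inj_on_elementary_coproduct])
qed

end

theorem corollary9:
  fixes sc :: "'k::field \<Rightarrow> 'a::{ring,monoid_mult} \<Rightarrow> 'a"
    and ns :: "nat list"
  assumes "alg_closed TYPE('k)"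
    and "k_algebra sc"
    and "\<forall>n\<in>set ns. 0 < n"
    and "iso_prod_matrix_algebras sc ns"
  shows "Frobdim sc = (\<Sum>i<length ns. (ns ! i)^2)"
proof -
  obtain \<phi> :: "'a \<Rightarrow> nat \<Rightarrow> nat \<Rightarrow> nat \<Rightarrow> 'k" where "matrix_coordinates sc ns \<phi>"
    using assms(2-4) unfolding iso_prod_matrix_algebras_def matrix_coordinates_def by blast
  then show ?thesis
    by (simp add: matrix_coordinates.Frobdim_eq_card_entries matrix_coordinates.card_entries)
qed

end
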